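(* Let $G$ be a finitely generated group and suppose there exists an automorphism $f$ of $G$ whose subgroup of fixed points is not finitely generated. Then for every integer $n\geq 1$ there exist finitely generated subgroups $H_1,\dots,H_n\leq G^n$ such that $\bigcap_{i\in I}H_i$ is finitely generated for every proper non-empty subset $I\subsetneq\{1,\dots,n\}$, but $\bigcap_{i=1}^n H_i$ is not finitely generated.
   Context: $G^n$ denotes the direct product of $n$ copies of $G$. *)

theory Defs
  imports "HOL-Algebra.Algebra"
begin

definition fg_subgroup :: "('a, 'b) monoid_scheme \<Rightarrow> 'a set \<Rightarrow> bool" where
  "fg_subgroup G H \<longleftrightarrow> (\<exists>S. finite S \<and> S \<subseteq> carrier G \<and> H = generate G S)"

definition fg_group :: "('a, 'b) monoid_scheme \<Rightarrow> bool" where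
  "fg_group G \<longleftrightarrow> fg_subgroup G (carrier G)"

definition DirPow :: "('a, 'b) monoid_scheme \<Rightarrow> nat \<Rightarrow> ('a list) monoid" where
  "DirPow G n = DirProd_list (replicate n G)"

end

theory Submission
  imports Defs
begin

text \<open>
  Let \<open>H\<^sub>i\<close> consist of the tuples with \<open>g\<^sub>i = g\<^sub>i\<^sub>+\<^sub>1\<close> for \<open>i < n\<close>, and \<open>H\<^sub>n\<close> of those with
  \<open>g\<^sub>n = f g\<^sub>1\<close> (list positions below are 0-based). A tuple in all \<open>H\<^sub>i\<close> is constant with
  value a fixed point of \<open>f\<close>, so the full intersection is a diagonal copy of \<open>Fix f\<close>; it maps
  onto \<open>Fix f\<close> under the first projection and hence is not finitely generated.
  For a proper subset \<open>I\<close> the intersection is the image of an endomorphism of the finitely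
  generated group \<open>G\<^sup>n\<close>. If \<open>n \<notin> I\<close>, send every coordinate to the first coordinate of its block
  of linked coordinates. Otherwise the automorphism \<open>(g\<^sub>1, \<dots>, g\<^sub>n) \<mapsto> (g\<^sub>2, \<dots>, g\<^sub>n, f g\<^sub>1)\<close>
  permutes the \<open>H\<^sub>i\<close> cyclically, which moves the missing index up to \<open>n\<close>.
\<close>

lemma DirPow_carrier:
  "carrier (DirPow G n) = {x. length x = n \<and> (\<forall>k<n. x ! k \<in> carrier G)}"
  unfolding DirPow_def
  using DirProd_list_carrier_mem[of _ "replicate n G"] DirProd_list_carrier_memI[of _ "replicate n G"]
  by auto

lemma DirPow_group: "group G \<Longrightarrow> group (DirPow G n)"
  unfolding DirPow_def by (rule DirProd_list_is_group) simp

lemma DirPow_Cons_iso: "(\<lambda>(x, xs). x # xs) \<in> iso (G \<times>\<times> DirPow G n) (DirPow G (Suc n))"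
  unfolding DirPow_def replicate_Suc by (rule DirProd_list_iso)

lemma DirPow_Suc_carrier:
  "carrier (DirPow G (Suc n)) = (\<lambda>(x, xs). x # xs) ` (carrier G \<times> carrier (DirPow G n))"
  unfolding DirPow_def replicate_Suc by (rule DirProd_list_carrier)

lemma DirPow_mult:
  assumes "x \<in> carrier (DirPow G n)" "y \<in> carrier (DirPow G n)"
  shows "x \<otimes>\<^bsub>DirPow G n\<^esub> y = map (\<lambda>k. x ! k \<otimes>\<^bsub>G\<^esub> y ! k) [0..<n]"
  using assms
proof (induction n arbitrary: x y)
  case 0
  then show ?case by (simp add: DirPow_def DirProd_list_def)
next
  case (Suc n)
  obtain a as b bs where x: "x = a # as" and y: "y = b # bs"
    and "a \<in> carrier G" "b \<in> carrier G" "as \<in> carrier (DirPow G n)" "bs \<in> carrier (DirPow G n)"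
    using Suc.prems unfolding DirPow_Suc_carrier by fastforce
  then have "x \<otimes>\<^bsub>DirPow G (Suc n)\<^esub> y = (a \<otimes>\<^bsub>G\<^esub> b) # (as \<otimes>\<^bsub>DirPow G n\<^esub> bs)"
    using hom_mult[OF iso_imp_homomorphism[OF DirPow_Cons_iso[of G n]], of "(a, as)" "(b, bs)"]
    by (simp add: x y)
  then show ?case
    using Suc.IH \<open>as \<in> _\<close> \<open>bs \<in> _\<close> by (simp add: x y map_upt_Suc del: upt_Suc)
qed

lemma DirPow_nth_hom:
  assumes "k < n"
  shows "(\<lambda>x. x ! k) \<in> hom (DirPow G n) G"
  using assms by (intro homI) (simp_all add: DirPow_carrier DirPow_mult)

lemma DirPow_tuple_hom:
  assumes hom: "\<And>k. k < n \<Longrightarrow> \<Phi> k \<in> hom H G"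
  shows "(\<lambda>x. map (\<lambda>k. \<Phi> k x) [0..<n]) \<in> hom H (DirPow G n)"
proof -
  have closed: "map (\<lambda>k. \<Phi> k x) [0..<n] \<in> carrier (DirPow G n)" if "x \<in> carrier H" for x
    using that hom hom_in_carrier by (fastforce simp: DirPow_carrier)
  show ?thesis
  proof (rule homI)
    fix x y assume "x \<in> carrier H" "y \<in> carrier H"
    then show "map (\<lambda>k. \<Phi> k (x \<otimes>\<^bsub>H\<^esub> y)) [0..<n] =
      map (\<lambda>k. \<Phi> k x) [0..<n] \<otimes>\<^bsub>DirPow G n\<^esub> map (\<lambda>k. \<Phi> k y) [0..<n]"
      by (simp add: DirPow_mult closed hom_mult hom)
  qed (rule closed)
qed

lemma fg_subgroup_imp_subgroup:
  assumes "group G" "fg_subgroup G K"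
  shows "subgroup K G"
  using assms group.generate_is_subgroup unfolding fg_subgroup_def by blast

lemma fg_subgroup_hom_image:
  assumes "group G" "group H" "h \<in> hom G H" "fg_subgroup G K"
  shows "fg_subgroup H (h ` K)"
proof -
  interpret group_hom G H h
    using assms by (simp add: group_hom_def group_hom_axioms_def)
  obtain S where S: "finite S" "S \<subseteq> carrier G" "K = generate G S"
    using assms(4) unfolding fg_subgroup_def by blast
  then have "h ` K = generate H (h ` S)"
    using generate_img by simp
  moreover have "h ` S \<subseteq> carrier H"
    using S(2) by auto
  ultimately show ?thesis
    unfolding fg_subgroup_def using S(1) by blast
qed

lemma fg_group_iso:
  assumes "group G" "group H" "h \<in> iso G H" "fg_group G"
  shows "fg_group H"
  using fg_subgroup_hom_image[OF assms(1,2) iso_imp_homomorphism] assms(3,4)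
  unfolding fg_group_def iso_iff by metis

lemma fg_group_DirProd:
  assumes "group G" "group H" "fg_group G" "fg_group H"
  shows "fg_group (G \<times>\<times> H)"
proof -
  interpret G: group G by fact
  interpret H: group H by fact
  interpret GH: group "G \<times>\<times> H" using DirProd_group assms(1,2) .
  obtain S T where S: "finite S" "S \<subseteq> carrier G" "carrier G = generate G S"
    and T: "finite T" "T \<subseteq> carrier H" "carrier H = generate H T"
    using assms(3,4) unfolding fg_group_def fg_subgroup_def by blast
  define U where "U = (\<lambda>g. (g, \<one>\<^bsub>H\<^esub>)) ` S \<union> (\<lambda>h. (\<one>\<^bsub>G\<^esub>, h)) ` T"
  have U: "finite U" "U \<subseteq> carrier (G \<times>\<times> H)"
    using S T unfolding U_def by auto
  have left: "(g, \<one>\<^bsub>H\<^esub>) \<in> generate (G \<times>\<times> H) U" if "g \<in> carrier G" for g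
  proof -
    interpret group_hom G "G \<times>\<times> H" "\<lambda>g. (g, \<one>\<^bsub>H\<^esub>)"
      by unfold_locales (auto intro: homI)
    have "(g, \<one>\<^bsub>H\<^esub>) \<in> generate (G \<times>\<times> H) ((\<lambda>g. (g, \<one>\<^bsub>H\<^esub>)) ` S)"
      using that S generate_img by blast
    moreover have "(\<lambda>g. (g, \<one>\<^bsub>H\<^esub>)) ` S \<subseteq> U"
      unfolding U_def by blast
    ultimately show ?thesis
      using GH.mono_generate by blast
  qed
  have right: "(\<one>\<^bsub>G\<^esub>, h) \<in> generate (G \<times>\<times> H) U" if "h \<in> carrier H" for h
  proof -
    interpret group_hom H "G \<times>\<times> H" "\<lambda>h. (\<one>\<^bsub>G\<^esub>, h)"
      by unfold_locales (auto intro: homI)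
    have "(\<one>\<^bsub>G\<^esub>, h) \<in> generate (G \<times>\<times> H) ((\<lambda>h. (\<one>\<^bsub>G\<^esub>, h)) ` T)"
      using that T generate_img by blast
    moreover have "(\<lambda>h. (\<one>\<^bsub>G\<^esub>, h)) ` T \<subseteq> U"
      unfolding U_def by blast
    ultimately show ?thesis
      using GH.mono_generate by blast
  qed
  have "(g, h) \<in> generate (G \<times>\<times> H) U" if "g \<in> carrier G" "h \<in> carrier H" for g h
    using generate.eng[OF left right] that by simp
  then have "carrier (G \<times>\<times> H) \<subseteq> generate (G \<times>\<times> H) U"
    by auto
  then have "carrier (G \<times>\<times> H) = generate (G \<times>\<times> H) U"
    using GH.generate_in_carrier[OF U(2)] by blast
  then show ?thesis
    unfolding fg_group_def fg_subgroup_def using U by blast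
qed

lemma fg_group_DirPow:
  assumes "group G" "fg_group G"
  shows "fg_group (DirPow G n)"
proof (induction n)
  case 0
  have "carrier (DirPow G 0) = {\<one>\<^bsub>DirPow G 0\<^esub>}"
    by (simp add: DirPow_def DirProd_list_def)
  then have "carrier (DirPow G 0) = generate (DirPow G 0) {}"
    using group.generate_empty[OF DirPow_group[OF assms(1)]] by simp
  then show ?case
    unfolding fg_group_def fg_subgroup_def by blast
next
  case (Suc n)
  have "group (G \<times>\<times> DirPow G n)"
    using DirProd_group assms(1) DirPow_group by blast
  then show ?case
    using fg_group_iso[OF _ DirPow_group[OF assms(1)] DirPow_Cons_iso]
      fg_group_DirProd[OF assms(1) DirPow_group[OF assms(1)] assms(2) Suc.IH] by blast
qed

definition link_subgroup :: "('a, 'b) monoid_scheme \<Rightarrow> ('a \<Rightarrow> 'a) \<Rightarrow> nat \<Rightarrow> nat \<Rightarrow> 'a list set" where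
  "link_subgroup G f n i =
     {x \<in> carrier (DirPow G n). if i < n then x ! (i - 1) = x ! i else x ! (n - 1) = f (x ! 0)}"

text \<open>The first position of the block of positions that the links in \<open>I\<close> tie to \<open>k\<close>.\<close>

fun run_start :: "nat set \<Rightarrow> nat \<Rightarrow> nat" where
  "run_start I 0 = 0"
| "run_start I (Suc k) = (if Suc k \<in> I then run_start I k else Suc k)"

lemma run_start_le: "run_start I k \<le> k"
  by (induction k) auto

lemma nth_run_start_eq:
  assumes "x \<in> (\<Inter>i\<in>I. link_subgroup G f n i)" "k < n"
  shows "x ! run_start I k = x ! k"
  using assms(2)
proof (induction k)
  case (Suc k)
  show ?case
  proof (cases "Suc k \<in> I")
    case True
    then have "x ! k = x ! Suc k"
      using assms(1) Suc.prems by (auto simp: link_subgroup_def)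
    then show ?thesis
      using Suc True by simp
  qed simp
qed simp

lemma INT_link_subgroup_eq_image:
  assumes "I \<subseteq> {1..<n}" "I \<noteq> {}"
  shows "(\<Inter>i\<in>I. link_subgroup G f n i) =
    (\<lambda>y. map (\<lambda>k. y ! run_start I k) [0..<n]) ` carrier (DirPow G n)"
    (is "_ = ?\<phi> ` _")
proof
  show "(\<Inter>i\<in>I. link_subgroup G f n i) \<subseteq> ?\<phi> ` carrier (DirPow G n)"
  proof
    fix x assume x: "x \<in> (\<Inter>i\<in>I. link_subgroup G f n i)"
    then have "x \<in> carrier (DirPow G n)"
      using assms(2) by (auto simp: link_subgroup_def)
    moreover have "x = ?\<phi> x"
      using calculation by (intro nth_equalityI) (simp_all add: DirPow_carrier nth_run_start_eq[OF x])
    ultimately show "x \<in> ?\<phi> ` carrier (DirPow G n)"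
      by (rule rev_image_eqI)
  qed
next
  show "?\<phi> ` carrier (DirPow G n) \<subseteq> (\<Inter>i\<in>I. link_subgroup G f n i)"
  proof clarify
    fix y i assume y: "y \<in> carrier (DirPow G n)" and i: "i \<in> I"
    then obtain k where k: "i = Suc k" "Suc k < n"
      using assms(1) by (cases i) auto
    have "run_start I k < n" if "k < n" for k
      using run_start_le that by (rule le_less_trans)
    then have "?\<phi> y \<in> carrier (DirPow G n)"
      using y by (auto simp: DirPow_carrier)
    then show "?\<phi> y \<in> link_subgroup G f n i"
      using k i by (simp add: link_subgroup_def del: upt_Suc)
  qed
qed

lemma fg_INT_link_subgroup_without_last:
  assumes "group G" "fg_group G" "I \<subseteq> {1..<n}" "I \<noteq> {}"
  shows "fg_subgroup (DirPow G n) (\<Inter>i\<in>I. link_subgroup G f n i)"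
proof -
  have "(\<lambda>y. map (\<lambda>k. y ! run_start I k) [0..<n]) \<in> hom (DirPow G n) (DirPow G n)"
    by (intro DirPow_tuple_hom DirPow_nth_hom le_less_trans[OF run_start_le])
  then show ?thesis
    unfolding INT_link_subgroup_eq_image[OF assms(3,4)]
    using fg_subgroup_hom_image[OF DirPow_group DirPow_group] fg_group_DirPow[OF assms(1,2)] assms(1)
    unfolding fg_group_def by blast
qed

definition twisted_shift :: "('a \<Rightarrow> 'a) \<Rightarrow> nat \<Rightarrow> 'a list \<Rightarrow> 'a list" where
  "twisted_shift f n x = map (\<lambda>k. if k < n - 1 then x ! Suc k else f (x ! 0)) [0..<n]"

lemma nth_twisted_shift:
  "k < n \<Longrightarrow> twisted_shift f n x ! k = (if k < n - 1 then x ! Suc k else f (x ! 0))"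
  by (simp add: twisted_shift_def)

lemma twisted_shift_hom:
  assumes "f \<in> hom G G"
  shows "twisted_shift f n \<in> hom (DirPow G n) (DirPow G n)"
  unfolding twisted_shift_def
proof (rule DirPow_tuple_hom)
  fix k assume "k < n"
  then show "(\<lambda>x. if k < n - 1 then x ! Suc k else f (x ! 0)) \<in> hom (DirPow G n) G"
    using DirPow_nth_hom[of "Suc k" n G] hom_compose[OF DirPow_nth_hom[of 0 n G] assms]
    by (cases "k < n - 1") (simp_all add: comp_def)
qed

lemma twisted_shift_surj:
  assumes "f ` carrier G = carrier G" "0 < n" "y \<in> carrier (DirPow G n)"
  shows "y \<in> twisted_shift f n ` carrier (DirPow G n)"
proof -
  define x where "x = map (\<lambda>k. if k = 0 then inv_into (carrier G) f (y ! (n - 1)) else y ! (k - 1)) [0..<n]"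
  have last: "y ! (n - 1) \<in> carrier G"
    using assms(2,3) by (simp add: DirPow_carrier)
  then have x: "x \<in> carrier (DirPow G n)"
    using assms inv_into_into[of "y ! (n - 1)" f "carrier G"] by (auto simp: x_def DirPow_carrier)
  have inv: "f (inv_into (carrier G) f (y ! (n - 1))) = y ! (n - 1)"
    using assms(1) last by (simp add: f_inv_into_f)
  have "twisted_shift f n x ! k = y ! k" if "k < n" for k
  proof (cases "k < n - 1")
    case False
    with that have "k = n - 1"
      by simp
    then show ?thesis
      using inv assms(2) by (simp add: twisted_shift_def x_def)
  qed (use that in \<open>simp add: twisted_shift_def x_def\<close>)
  then have "y = twisted_shift f n x"
    using assms(3) by (intro nth_equalityI) (simp_all add: twisted_shift_def DirPow_carrier)
  with x show ?thesis
    by (rule rev_image_eqI)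
qed

lemma twisted_shift_mem_link_subgroup_iff:
  assumes "f \<in> mon G G" "2 \<le> n" "x \<in> carrier (DirPow G n)" "i \<in> {1..n}"
  shows "twisted_shift f n x \<in> link_subgroup G f n i \<longleftrightarrow> x \<in> link_subgroup G f n (Suc (i mod n))"
proof -
  have "f \<in> hom G G"
    using assms(1) by (simp add: mon_def)
  then have shift: "twisted_shift f n x \<in> carrier (DirPow G n)"
    using assms(3) by (intro hom_in_carrier[OF twisted_shift_hom])
  define m where "m = n - 2"
  have n: "n = Suc (Suc m)"
    unfolding m_def using assms(2) by arith
  have "i \<le> m \<or> i = Suc m \<or> i = n"
    using assms(4) n by auto
  then consider "i \<le> m" | "i = Suc m" | "i = n"
    by blast
  then show ?thesis
  proof cases
    case 1
    then show ?thesis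
      using assms(3,4) shift n by (auto simp: link_subgroup_def nth_twisted_shift)
  next
    case 2
    then show ?thesis
      using assms(3,4) shift n by (auto simp: link_subgroup_def nth_twisted_shift)
  next
    case 3
    moreover have "x ! 0 \<in> carrier G" "x ! 1 \<in> carrier G"
      using assms(3) n by (auto simp: DirPow_carrier)
    ultimately show ?thesis
      using assms shift n by (auto simp: link_subgroup_def nth_twisted_shift mon_def inj_on_eq_iff)
  qed
qed

lemma twisted_shift_image_INT_link_subgroup:
  assumes "f \<in> iso G G" "2 \<le> n" "I \<subseteq> {1..n}" "I \<noteq> {}"
  shows "twisted_shift f n ` (\<Inter>i\<in>I. link_subgroup G f n (Suc (i mod n))) =
    (\<Inter>i\<in>I. link_subgroup G f n i)"
proof -
  have mon: "f \<in> mon G G" and surj: "f ` carrier G = carrier G"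
    using assms(1) by (auto simp: iso_iff mon_def)
  have in_carrier: "x \<in> carrier (DirPow G n)" if "x \<in> (\<Inter>i\<in>I. link_subgroup G f n (g i))" for x g
    using that assms(4) by (auto simp: link_subgroup_def)
  note iff = twisted_shift_mem_link_subgroup_iff[OF mon assms(2)]
  show ?thesis
  proof
    show "twisted_shift f n ` (\<Inter>i\<in>I. link_subgroup G f n (Suc (i mod n))) \<subseteq> (\<Inter>i\<in>I. link_subgroup G f n i)"
    proof clarify
      fix x i assume x: "x \<in> (\<Inter>i\<in>I. link_subgroup G f n (Suc (i mod n)))" and "i \<in> I"
      then show "twisted_shift f n x \<in> link_subgroup G f n i"
        using iff[OF in_carrier[OF x]] assms(3) by blast
    qed
  next
    show "(\<Inter>i\<in>I. link_subgroup G f n i) \<subseteq> twisted_shift f n ` (\<Inter>i\<in>I. link_subgroup G f n (Suc (i mod n)))"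
    proof
      fix y assume y: "y \<in> (\<Inter>i\<in>I. link_subgroup G f n i)"
      then have "y \<in> twisted_shift f n ` carrier (DirPow G n)"
        using twisted_shift_surj[OF surj] assms(2) in_carrier[of y "\<lambda>i. i"] by simp
      then obtain x where x: "y = twisted_shift f n x" "x \<in> carrier (DirPow G n)"
        by (rule imageE)
      have "x \<in> (\<Inter>i\<in>I. link_subgroup G f n (Suc (i mod n)))"
      proof
        fix i assume "i \<in> I"
        then show "x \<in> link_subgroup G f n (Suc (i mod n))"
          using y x iff[OF x(2)] assms(3) by blast
      qed
      with x show "y \<in> twisted_shift f n ` (\<Inter>i\<in>I. link_subgroup G f n (Suc (i mod n)))"
        by blast
    qed
  qed
qed

lemma fg_INT_link_subgroup:
  assumes "group G" "fg_group G" "f \<in> iso G G" "2 \<le> n"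
    and "I \<subseteq> {1..n}" "I \<noteq> {}" "I \<noteq> {1..n}"
  shows "fg_subgroup (DirPow G n) (\<Inter>i\<in>I. link_subgroup G f n i)"
proof -
  obtain j where j: "j \<in> {1..n}" "j \<notin> I"
    using assms(5,7) by blast
  have Gn: "group (DirPow G n)"
    using assms(1) by (rule DirPow_group)
  have shift_hom: "twisted_shift f n \<in> hom (DirPow G n) (DirPow G n)"
    using assms(3) by (intro twisted_shift_hom iso_imp_homomorphism)
  have "j \<le> n"
    using j(1) by simp
  then show ?thesis
    using assms(5,6) j(2)
  proof (induction j arbitrary: I rule: inc_induct)
    case base
    then have "I \<subseteq> {1..<n}"
      by auto
    then show ?case
      using fg_INT_link_subgroup_without_last[OF assms(1,2)] base.prems(2) by blast
  next
    case (step m)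
    let ?succ = "\<lambda>i. Suc (i mod n)"
    have "?succ ` I \<subseteq> {1..n}" "?succ ` I \<noteq> {}"
      using step.prems(2) assms(4) by (auto simp: Suc_le_eq)
    moreover have "Suc m \<notin> ?succ ` I"
    proof
      assume "Suc m \<in> ?succ ` I"
      then obtain i where i: "i \<in> I" "m = i mod n"
        by blast
      have "1 \<le> m"
        using j(1) step.hyps(1) by simp
      then have "i = m"
        using i step.prems(1) by (cases "i = n") auto
      then show False
        using i step.prems(3) by simp
    qed
    ultimately have "fg_subgroup (DirPow G n) (\<Inter>i\<in>?succ ` I. link_subgroup G f n i)"
      by (rule step.IH)
    then have "fg_subgroup (DirPow G n) (\<Inter>i\<in>I. link_subgroup G f n (?succ i))"
      by (simp add: image_image)
    then have "fg_subgroup (DirPow G n) (twisted_shift f n ` (\<Inter>i\<in>I. link_subgroup G f n (?succ i)))"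
      by (rule fg_subgroup_hom_image[OF Gn Gn shift_hom])
    then show ?case
      using twisted_shift_image_INT_link_subgroup[OF assms(3,4) step.prems(1,2)] by simp
  qed
qed

lemma INT_link_subgroup_all:
  assumes "0 < n"
  shows "(\<Inter>i\<in>{1..n}. link_subgroup G f n i) = replicate n ` {g \<in> carrier G. f g = g}"
proof
  show "(\<Inter>i\<in>{1..n}. link_subgroup G f n i) \<subseteq> replicate n ` {g \<in> carrier G. f g = g}"
  proof
    fix x assume x: "x \<in> (\<Inter>i\<in>{1..n}. link_subgroup G f n i)"
    then have last: "x \<in> link_subgroup G f n n"
      using assms by simp
    then have carrier: "x \<in> carrier (DirPow G n)"
      by (simp add: link_subgroup_def)
    have const: "x ! k = x ! 0" if "k < n" for k
      using that
    proof (induction k)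
      case (Suc k)
      then have "x \<in> link_subgroup G f n (Suc k)"
        using x by simp
      then show ?case
        using Suc by (simp add: link_subgroup_def)
    qed simp
    have "length x = n"
      using carrier by (simp add: DirPow_carrier)
    have "f (x ! 0) = x ! 0"
      using last const[of "n - 1"] assms by (simp add: link_subgroup_def)
    moreover have "x = replicate n (x ! 0)"
    proof (rule nth_equalityI)
      fix k assume "k < length x"
      then show "x ! k = replicate n (x ! 0) ! k"
        using const[of k] \<open>length x = n\<close> by simp
    qed (simp add: \<open>length x = n\<close>)
    moreover have "x ! 0 \<in> carrier G"
      using carrier assms by (simp add: DirPow_carrier)
    ultimately show "x \<in> replicate n ` {g \<in> carrier G. f g = g}"
      by (intro rev_image_eqI[where x = "x ! 0"]) simp_all
  qed
next
  show "replicate n ` {g \<in> carrier G. f g = g} \<subseteq> (\<Inter>i\<in>{1..n}. link_subgroup G f n i)"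
    using assms by (auto simp: link_subgroup_def DirPow_carrier)
qed

lemma not_fg_INT_link_subgroup_all:
  assumes "group G" "\<not> fg_subgroup G {x \<in> carrier G. f x = x}" "0 < n"
  shows "\<not> fg_subgroup (DirPow G n) (\<Inter>i\<in>{1..n}. link_subgroup G f n i)"
proof
  assume "fg_subgroup (DirPow G n) (\<Inter>i\<in>{1..n}. link_subgroup G f n i)"
  then have "fg_subgroup G ((\<lambda>x. x ! 0) ` (\<Inter>i\<in>{1..n}. link_subgroup G f n i))"
    using assms(3) by (intro fg_subgroup_hom_image[OF DirPow_group[OF assms(1)] assms(1) DirPow_nth_hom])
  moreover have "(\<lambda>x. x ! 0) ` (\<Inter>i\<in>{1..n}. link_subgroup G f n i) = {x \<in> carrier G. f x = x}"
    using assms(3) INT_link_subgroup_all[of n G f] by (simp add: image_image)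
  ultimately show False
    using assms(2) by simp
qed

theorem lemma2p4:
  fixes G :: "('a, 'b) monoid_scheme" and f :: "'a \<Rightarrow> 'a" and n :: nat
  assumes "group G"
    and "fg_group G"
    and "f \<in> iso G G"
    and "\<not> fg_subgroup G {x \<in> carrier G. f x = x}"
    and "n \<ge> 2"
  shows "\<exists>H :: nat \<Rightarrow> 'a list set.
           (\<forall>i \<in> {1..n}. subgroup (H i) (DirPow G n) \<and> fg_subgroup (DirPow G n) (H i))
         \<and> (\<forall>I. I \<subseteq> {1..n} \<and> I \<noteq> {} \<and> I \<noteq> {1..n} \<longrightarrow> fg_subgroup (DirPow G n) (\<Inter>i\<in>I. H i))
         \<and> \<not> fg_subgroup (DirPow G n) (\<Inter>i\<in>{1..n}. H i)"
proof (intro exI conjI ballI allI impI)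
  let ?H = "link_subgroup G f n"
  show proper: "fg_subgroup (DirPow G n) (\<Inter>i\<in>I. ?H i)"
    if "I \<subseteq> {1..n} \<and> I \<noteq> {} \<and> I \<noteq> {1..n}" for I
    using fg_INT_link_subgroup[OF assms(1,2,3,5)] that by blast
  show single: "fg_subgroup (DirPow G n) (?H i)" if "i \<in> {1..n}" for i
  proof -
    have "{i} \<noteq> {1..n}"
    proof
      assume "{i} = {1..n}"
      then have "1 \<in> {i}" "2 \<in> {i}"
        using assms(5) by auto
      then show False
        by simp
    qed
    then show ?thesis
      using proper[of "{i}"] that by simp
  qed
  show "subgroup (?H i) (DirPow G n)" if "i \<in> {1..n}" for i
    by (rule fg_subgroup_imp_subgroup[OF DirPow_group[OF assms(1)] single[OF that]])
  show "\<not> fg_subgroup (DirPow G n) (\<Inter>i\<in>{1..n}. ?H i)"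
    using not_fg_INT_link_subgroup_all[OF assms(1,4)] assms(5) by simp
qed

end
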